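(* Let $\Delta$ be a local derivation of $\mathcal{S}$ with $\Delta(L_0)=\Delta(L_1)=0$. Then $\Delta(G_0)=0$.
   Context: $\mathcal{S}$ is the centerless super Virasoro algebra: the Lie superalgebra over $\mathbb{C}$ with basis $\{L_m,G_n: m,n\in\mathbb{Z}\}$, $L_m$ even, $G_n$ odd, and brackets $[L_m,L_n]=(m-n)L_{m+n}$, $[L_m,G_r]=(\frac m2-r)G_{m+r}$, $[G_r,G_s]=2L_{r+s}$. A homogeneous linear map $D$ of parity $|D|$ is a derivation if $D([x,y])=[D(x),y]+(-1)^{|D||x|}[x,D(y)]$ for homogeneous $x,y$; derivations are sums of even and odd ones. A linear map $\Delta:\mathcal{S}\to\mathcal{S}$ is a local derivation if for every $x$ there is a derivation $D_x$ with $\Delta(x)=D_x(x)$. *)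

theory Defs
  imports Complex_Main "HOL-Library.Poly_Mapping"
begin

text \<open>Basis of the centerless super Virasoro algebra: SL m = L_m (even), SG r = G_r (odd).\<close>
datatype sbasis = SL int | SG int

type_synonym svir = "sbasis \<Rightarrow>\<^sub>0 complex"

definition Lb :: "int \<Rightarrow> svir" where "Lb m = Poly_Mapping.single (SL m) 1"
definition Gb :: "int \<Rightarrow> svir" where "Gb r = Poly_Mapping.single (SG r) 1"

definition ssmul :: "complex \<Rightarrow> svir \<Rightarrow> svir" where
  "ssmul c x = Poly_Mapping.map (\<lambda>a. c * a) x"

text \<open>c times the bracket of two basis elements.\<close>
fun bbr :: "complex \<Rightarrow> sbasis \<Rightarrow> sbasis \<Rightarrow> svir" where
  "bbr c (SL m) (SL n) = Poly_Mapping.single (SL (m + n)) (c * of_int (m - n))"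
| "bbr c (SL m) (SG r) = Poly_Mapping.single (SG (m + r)) (c * (of_int m / 2 - of_int r))"
| "bbr c (SG r) (SL m) = Poly_Mapping.single (SG (m + r)) (- c * (of_int m / 2 - of_int r))"
| "bbr c (SG r) (SG s) = Poly_Mapping.single (SL (r + s)) (c * 2)"

definition sbr :: "svir \<Rightarrow> svir \<Rightarrow> svir" where
  "sbr x y = (\<Sum>a\<in>Poly_Mapping.keys x. \<Sum>b\<in>Poly_Mapping.keys y. bbr (Poly_Mapping.lookup x a * Poly_Mapping.lookup y b) a b)"

definition has_parity :: "bool \<Rightarrow> svir \<Rightarrow> bool" where
  "has_parity p x = (if p then Poly_Mapping.keys x \<subseteq> SG ` UNIV else Poly_Mapping.keys x \<subseteq> SL ` UNIV)"

definition clinear_map :: "(svir \<Rightarrow> svir) \<Rightarrow> bool" where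
  "clinear_map D = ((\<forall>x y. D (x + y) = D x + D y) \<and> (\<forall>c x. D (ssmul c x) = ssmul c (D x)))"

definition hom_derivation :: "bool \<Rightarrow> (svir \<Rightarrow> svir) \<Rightarrow> bool" where
  "hom_derivation p D = (clinear_map D \<and>
     (\<forall>q x. has_parity q x \<longrightarrow> has_parity (q \<noteq> p) (D x)) \<and>
     (\<forall>px py x y. has_parity px x \<longrightarrow> has_parity py y \<longrightarrow>
        D (sbr x y) = sbr (D x) y + ssmul (if p \<and> px then -1 else 1) (sbr x (D y))))"

definition is_derivation :: "(svir \<Rightarrow> svir) \<Rightarrow> bool" where
  "is_derivation D = (\<exists>D0 D1. hom_derivation False D0 \<and> hom_derivation True D1 \<and>
     (\<forall>x. D x = D0 x + D1 x))"

definition local_derivation :: "(svir \<Rightarrow> svir) \<Rightarrow> bool" where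
  "local_derivation \<Delta> = (clinear_map \<Delta> \<and> (\<forall>x. \<exists>D. is_derivation D \<and> \<Delta> x = D x))"

end

theory Submission imports Defs begin

(*
  Because ad L_0 acts on
  degree n by -n, the coefficients of D(L_i) and D(G_i) outside degree i are determined by
  D(L_0). Testing Delta on x = L_i + t G_i with Delta(L_i) = 0, for both roots +-t of a suitable
  quadratic equation, shows that Delta(G_0) lives in degree 0 and that the even part of
  Delta(G_1) lives in degrees 1, 2, 3; identities valid for every derivation then kill the
  G_0-coefficient of Delta(G_0) and the L_1-coefficient of Delta(G_1). Finally, on
  x = G_0 + s G_1 the odd coefficients g_n of D(L_0), rescaled by 2/n, obey g_n + s g_(n-1) = 0
  outside degrees 0..3, so finiteness of their support makes them vanish below 0 and above 2. What
  remains is the identity s y_2 = y_3 - s^2 p between the L-coefficients y_2, y_3 of Delta(G_1)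
  and the L_0-coefficient p of Delta(G_0); taking s = 1, -1, 2 gives p = 0.
*)

abbreviation coeff :: "svir \<Rightarrow> sbasis \<Rightarrow> complex" where
  "coeff \<equiv> Poly_Mapping.lookup"

lemma coeff_ssmul [simp]: "coeff (ssmul c x) k = c * coeff x k"
  unfolding ssmul_def by (simp add: map.rep_eq when_def)

lemma ssmul_0 [simp]: "ssmul 0 x = 0"
  by (rule poly_mapping_eqI) simp

lemma ssmul_add: "ssmul c (x + y) = ssmul c x + ssmul c y"
  by (rule poly_mapping_eqI) (simp add: lookup_add algebra_simps)

lemma sum_keys_single_term:
  assumes "\<And>m. f (SL m) = (if SL m = a0 then coeff v a0 * c else 0)"
    and "\<And>m. f (SG m) = (if SG m = a0 then coeff v a0 * c else 0)"
  shows "(\<Sum>a\<in>Poly_Mapping.keys v. f a) = coeff v a0 * c"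
proof -
  have "f a = (if a = a0 then coeff v a0 * c else 0)" for a
    using assms by (cases a) auto
  then have "(\<Sum>a\<in>Poly_Mapping.keys v. f a) =
      (\<Sum>a\<in>Poly_Mapping.keys v. if a = a0 then coeff v a0 * c else 0)"
    by simp
  also have "\<dots> = coeff v a0 * c" by (simp add: sum.delta' in_keys_iff)
  finally show ?thesis .
qed

lemma coeff_sbr_single_right: "coeff (sbr v (Poly_Mapping.single b 1)) k =
  (\<Sum>a\<in>Poly_Mapping.keys v. coeff (bbr (coeff v a) a b) k)"
  by (simp add: sbr_def lookup_sum)

lemma coeff_sbr_single_left: "coeff (sbr (Poly_Mapping.single b 1) v) k =
  (\<Sum>a\<in>Poly_Mapping.keys v. coeff (bbr (coeff v a) b a) k)"
  by (simp add: sbr_def lookup_sum)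

lemma coeff_sbr_Lb_SL: "coeff (sbr v (Lb n)) (SL k) = coeff v (SL (k - n)) * of_int (k - n - n)"
  unfolding Lb_def coeff_sbr_single_right
  by (rule sum_keys_single_term) (auto simp: lookup_single when_def algebra_simps)

lemma coeff_sbr_Lb_SG:
  "coeff (sbr v (Lb n)) (SG k) = coeff v (SG (k - n)) * (- (of_int n / 2 - of_int (k - n)))"
  unfolding Lb_def coeff_sbr_single_right
  by (rule sum_keys_single_term) (auto simp: lookup_single when_def algebra_simps)

lemma coeff_sbr_Gb_SL: "coeff (sbr v (Gb n)) (SL k) = coeff v (SG (k - n)) * 2"
  unfolding Gb_def coeff_sbr_single_right
  by (rule sum_keys_single_term) (auto simp: lookup_single when_def algebra_simps)

lemma coeff_sbr_Gb_SG:
  "coeff (sbr v (Gb n)) (SG k) = coeff v (SL (k - n)) * (of_int (k - n) / 2 - of_int n)"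
  unfolding Gb_def coeff_sbr_single_right
  by (rule sum_keys_single_term) (auto simp: lookup_single when_def algebra_simps)

lemma coeff_Lb_sbr_SL: "coeff (sbr (Lb n) v) (SL k) = coeff v (SL (k - n)) * of_int (n - (k - n))"
  unfolding Lb_def coeff_sbr_single_left
  by (rule sum_keys_single_term) (auto simp: lookup_single when_def algebra_simps)

lemma coeff_Lb_sbr_SG:
  "coeff (sbr (Lb n) v) (SG k) = coeff v (SG (k - n)) * (of_int n / 2 - of_int (k - n))"
  unfolding Lb_def coeff_sbr_single_left
  by (rule sum_keys_single_term) (auto simp: lookup_single when_def algebra_simps)

lemma coeff_Gb_sbr_SL: "coeff (sbr (Gb n) v) (SL k) = coeff v (SG (k - n)) * 2"
  unfolding Gb_def coeff_sbr_single_left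
  by (rule sum_keys_single_term) (auto simp: lookup_single when_def algebra_simps)

lemma coeff_Gb_sbr_SG:
  "coeff (sbr (Gb n) v) (SG k) = coeff v (SL (k - n)) * (- (of_int (k - n) / 2 - of_int n))"
  unfolding Gb_def coeff_sbr_single_left
  by (rule sum_keys_single_term) (auto simp: lookup_single when_def algebra_simps)

lemmas coeff_sbr_basis = coeff_sbr_Lb_SL coeff_sbr_Lb_SG coeff_sbr_Gb_SL coeff_sbr_Gb_SG
  coeff_Lb_sbr_SL coeff_Lb_sbr_SG coeff_Gb_sbr_SL coeff_Gb_sbr_SG

lemma sbr_Lb_Lb: "sbr (Lb m) (Lb n) = ssmul (of_int (m - n)) (Lb (m + n))"
  unfolding sbr_def Lb_def by (rule poly_mapping_eqI) (simp add: lookup_single when_def)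

lemma sbr_Lb_Gb: "sbr (Lb m) (Gb r) = ssmul (of_int m / 2 - of_int r) (Gb (m + r))"
  unfolding sbr_def Lb_def Gb_def by (rule poly_mapping_eqI) (simp add: lookup_single when_def)

lemma sbr_Gb_Lb: "sbr (Gb r) (Lb m) = ssmul (- (of_int m / 2 - of_int r)) (Gb (m + r))"
  unfolding sbr_def Lb_def Gb_def
  by (rule poly_mapping_eqI) (simp add: lookup_single when_def algebra_simps)

lemma sbr_Gb_Gb: "sbr (Gb r) (Gb s) = ssmul 2 (Lb (r + s))"
  unfolding sbr_def Lb_def Gb_def
  by (rule poly_mapping_eqI) (simp add: lookup_single when_def algebra_simps)

lemmas sbr_basis = sbr_Lb_Lb sbr_Lb_Gb sbr_Gb_Lb sbr_Gb_Gb

lemma sbr_add_Lb: "sbr (v + w) (Lb i) = sbr v (Lb i) + sbr w (Lb i)"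
proof (rule poly_mapping_eqI)
  fix k
  show "coeff (sbr (v + w) (Lb i)) k = coeff (sbr v (Lb i) + sbr w (Lb i)) k"
    by (cases k) (simp_all add: lookup_add coeff_sbr_basis algebra_simps)
qed

lemma sbr_add_Gb: "sbr (v + w) (Gb i) = sbr v (Gb i) + sbr w (Gb i)"
proof (rule poly_mapping_eqI)
  fix k
  show "coeff (sbr (v + w) (Gb i)) k = coeff (sbr v (Gb i) + sbr w (Gb i)) k"
    by (cases k) (simp_all add: lookup_add coeff_sbr_basis algebra_simps)
qed

lemma finite_coeffs_SG: "finite {k. coeff v (SG k) \<noteq> 0}"
proof -
  have "{k. coeff v (SG k) \<noteq> 0} = SG -` Poly_Mapping.keys v" by (auto simp: in_keys_iff)
  then show ?thesis by (simp add: finite_vimageI inj_def)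
qed

lemma has_parity_Lb [simp]: "has_parity False (Lb n)"
  unfolding has_parity_def Lb_def by simp

lemma has_parity_Gb [simp]: "has_parity True (Gb n)"
  unfolding has_parity_def Gb_def by simp

lemma coeff_SL_of_odd: "has_parity True v \<Longrightarrow> coeff v (SL k) = 0"
  unfolding has_parity_def by (auto simp: in_keys_iff)

lemma coeff_SG_of_even: "has_parity False v \<Longrightarrow> coeff v (SG k) = 0"
  unfolding has_parity_def by (auto simp: in_keys_iff)

lemma hom_derivation_add: "hom_derivation p E \<Longrightarrow> E (x + y) = E x + E y"
  unfolding hom_derivation_def clinear_map_def by blast

lemma hom_derivation_ssmul: "hom_derivation p E \<Longrightarrow> E (ssmul c x) = ssmul c (E x)"
  unfolding hom_derivation_def clinear_map_def by blast

lemma hom_derivation_parity: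
  "hom_derivation p E \<Longrightarrow> has_parity q x \<Longrightarrow> has_parity (q \<noteq> p) (E x)"
  unfolding hom_derivation_def by blast

lemma coeff_hom_derivation_sbr:
  assumes "hom_derivation p E" "has_parity px x" "has_parity py y"
  shows "coeff (E (sbr x y)) b =
    coeff (sbr (E x) y) b + (if p \<and> px then -1 else 1) * coeff (sbr x (E y)) b"
  using assms unfolding hom_derivation_def by (simp add: lookup_add)

lemma even_derivation_Lb_SG: "hom_derivation False E \<Longrightarrow> coeff (E (Lb n)) (SG k) = 0"
  using hom_derivation_parity[of False E False "Lb n"] coeff_SG_of_even by simp

lemma even_derivation_Gb_SL: "hom_derivation False E \<Longrightarrow> coeff (E (Gb n)) (SL k) = 0"
  using hom_derivation_parity[of False E True "Gb n"] coeff_SL_of_odd by simp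

lemma odd_derivation_Lb_SL: "hom_derivation True E \<Longrightarrow> coeff (E (Lb n)) (SL k) = 0"
  using hom_derivation_parity[of True E False "Lb n"] coeff_SL_of_odd by simp

lemma odd_derivation_Gb_SG: "hom_derivation True E \<Longrightarrow> coeff (E (Gb n)) (SG k) = 0"
  using hom_derivation_parity[of True E True "Gb n"] coeff_SG_of_even by simp

lemma even_derivation_degree_zero:
  assumes E: "hom_derivation False E"
  shows "coeff (E (Gb 0)) (SG 0) = 0"
    and "coeff (E (Lb 1)) (SL 1) = coeff (E (Gb 1)) (SG 1)"
proof -
  note simps = sbr_basis hom_derivation_ssmul[OF E] coeff_sbr_basis
    even_derivation_Lb_SG[OF E] even_derivation_Gb_SL[OF E]
  have "coeff (E (Lb 0)) (SL 0) = 0"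
    using coeff_hom_derivation_sbr[OF E, of True "Gb 1" False "Lb 0" "SG 1"]
    by (simp add: simps algebra_simps)
  moreover have "2 * coeff (E (Lb 0)) (SL 0) = 4 * coeff (E (Gb 0)) (SG 0)"
    using coeff_hom_derivation_sbr[OF E, of True "Gb 0" True "Gb 0" "SL 0"]
    by (simp add: simps algebra_simps)
  ultimately show G0: "coeff (E (Gb 0)) (SG 0) = 0" by simp
  show "coeff (E (Lb 1)) (SL 1) = coeff (E (Gb 1)) (SG 1)"
    using coeff_hom_derivation_sbr[OF E, of True "Gb 1" True "Gb 0" "SL 1"] G0
    by (simp add: simps algebra_simps)
qed

lemma odd_derivation_degree_zero:
  assumes E: "hom_derivation True E"
  shows "coeff (E (Gb 1)) (SL 1) = coeff (E (Gb 0)) (SL 0)"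
    and "coeff (E (Lb 1)) (SG 1) = - coeff (E (Gb 0)) (SL 0) / 4"
proof -
  note simps = sbr_basis hom_derivation_ssmul[OF E] coeff_sbr_basis
    odd_derivation_Lb_SL[OF E] odd_derivation_Gb_SG[OF E]
  define c0 where "c0 = coeff (E (Gb 0)) (SL 0)"
  define c1 where "c1 = coeff (E (Gb 1)) (SL 1)"
  define cm where "cm = coeff (E (Gb (-1))) (SL (-1))"
  define bm where "bm = coeff (E (Lb (-1))) (SG (-1))"
  have "2 * bm = c0 - cm / 2"
    using coeff_hom_derivation_sbr[OF E, of True "Gb 0" True "Gb (-1)" "SG (-1)"]
    by (simp add: simps c0_def cm_def bm_def)
  moreover have "3/2 * c0 = 2 * c1 - 2 * bm"
    using coeff_hom_derivation_sbr[OF E, of True "Gb 1" False "Lb (-1)" "SL 0"]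
    by (simp add: simps c0_def c1_def bm_def)
  moreover have "0 = 3/2 * c1 - 3/2 * cm"
    using coeff_hom_derivation_sbr[OF E, of True "Gb 1" True "Gb (-1)" "SG 0"]
      coeff_hom_derivation_sbr[OF E, of True "Gb 0" True "Gb 0" "SG 0"]
    by (simp add: simps c1_def cm_def algebra_simps)
  ultimately have "c1 = c0" by algebra
  then show c1: "coeff (E (Gb 1)) (SL 1) = coeff (E (Gb 0)) (SL 0)"
    by (simp add: c0_def c1_def)
  show "coeff (E (Lb 1)) (SG 1) = - coeff (E (Gb 0)) (SL 0) / 4"
    using coeff_hom_derivation_sbr[OF E, of True "Gb 1" True "Gb 0" "SG 1"] c1
    by (simp add: simps field_simps)
qed

lemma is_derivationE:
  assumes "is_derivation D"
  obtains D0 D1 where "hom_derivation False D0" "hom_derivation True D1" "\<And>x. D x = D0 x + D1 x"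
  using assms unfolding is_derivation_def by blast

lemma derivation_add: "is_derivation D \<Longrightarrow> D (x + y) = D x + D y"
  by (erule is_derivationE) (simp add: hom_derivation_add algebra_simps)

lemma derivation_ssmul: "is_derivation D \<Longrightarrow> D (ssmul c x) = ssmul c (D x)"
  by (erule is_derivationE) (simp add: hom_derivation_ssmul ssmul_add)

lemma derivation_degree_zero:
  assumes "is_derivation D"
  shows "coeff (D (Gb 0)) (SG 0) = 0"
    and "coeff (D (Gb 1)) (SL 1) = coeff (D (Gb 0)) (SL 0)"
    and "coeff (D (Lb 1)) (SG 1) = - coeff (D (Gb 0)) (SL 0) / 4"
    and "coeff (D (Lb 1)) (SL 1) = coeff (D (Gb 1)) (SG 1)"
proof -
  obtain D0 D1 where D0: "hom_derivation False D0" and D1: "hom_derivation True D1"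
    and D: "\<And>x. D x = D0 x + D1 x"
    using is_derivationE[OF assms] by blast
  note simps = D lookup_add even_derivation_Lb_SG[OF D0] even_derivation_Gb_SL[OF D0]
    odd_derivation_Lb_SL[OF D1] odd_derivation_Gb_SG[OF D1]
  show "coeff (D (Gb 0)) (SG 0) = 0"
    using even_derivation_degree_zero(1)[OF D0] by (simp add: simps)
  show "coeff (D (Gb 1)) (SL 1) = coeff (D (Gb 0)) (SL 0)"
    using odd_derivation_degree_zero(1)[OF D1] by (simp add: simps)
  show "coeff (D (Lb 1)) (SG 1) = - coeff (D (Gb 0)) (SL 0) / 4"
    using odd_derivation_degree_zero(2)[OF D1] by (simp add: simps)
  show "coeff (D (Lb 1)) (SL 1) = coeff (D (Gb 1)) (SG 1)"
    using even_derivation_degree_zero(2)[OF D0] by (simp add: simps)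
qed

lemma hom_derivation_L0_eigen:
  assumes E: "hom_derivation p E" and "has_parity q e" and "sbr (Lb 0) e = ssmul (- of_int i) e"
    and "\<And>w. coeff (sbr (Lb 0) w) b = - of_int n * coeff w b"
  shows "(of_int n - of_int i) * coeff (E e) b = coeff (sbr (E (Lb 0)) e) b"
  using coeff_hom_derivation_sbr[OF E, of False "Lb 0" q e b] assms(2-)
  by (simp add: hom_derivation_ssmul[OF E] algebra_simps)

lemma derivation_L0_eigen:
  assumes "is_derivation D" and e: "e = Lb i \<or> e = Gb i" and b: "b = SL n \<or> b = SG n"
  shows "(of_int n - of_int i) * coeff (D e) b = coeff (sbr (D (Lb 0)) e) b"
proof -
  obtain D0 D1 where D0: "hom_derivation False D0" and D1: "hom_derivation True D1"
    and D: "\<And>x. D x = D0 x + D1 x"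
    using is_derivationE[OF assms(1)] by blast
  have par: "has_parity False e \<or> has_parity True e" using e by auto
  have eigen: "sbr (Lb 0) e = ssmul (- of_int i) e" using e by (auto simp: sbr_basis)
  have ad: "coeff (sbr (Lb 0) w) b = - of_int n * coeff w b" for w
    using b by (auto simp: coeff_sbr_basis)
  have "sbr (D (Lb 0)) e = sbr (D0 (Lb 0)) e + sbr (D1 (Lb 0)) e"
    using e by (auto simp: D sbr_add_Lb sbr_add_Gb)
  then show ?thesis
    using par hom_derivation_L0_eigen[OF D0 _ eigen ad] hom_derivation_L0_eigen[OF D1 _ eigen ad]
    by (auto simp: D lookup_add algebra_simps)
qed

lemma derivation_Gb_SL:
  assumes "is_derivation D" and "n \<noteq> i"
  shows "coeff (D (Gb i)) (SL n) = 2 * coeff (D (Lb 0)) (SG (n - i)) / of_int (n - i)"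
  using derivation_L0_eigen[OF assms(1), of "Gb i" i "SL n" n] assms(2)
  by (simp add: coeff_sbr_basis field_simps)

lemma local_derivation_add: "local_derivation \<Delta> \<Longrightarrow> \<Delta> (x + y) = \<Delta> x + \<Delta> y"
  unfolding local_derivation_def clinear_map_def by blast

lemma local_derivation_ssmul: "local_derivation \<Delta> \<Longrightarrow> \<Delta> (ssmul c x) = ssmul c (\<Delta> x)"
  unfolding local_derivation_def clinear_map_def by blast

lemma local_derivation_combination:
  assumes ld: "local_derivation \<Delta>"
  obtains D where "is_derivation D" and "\<Delta> a + ssmul t (\<Delta> b) = D a + ssmul t (D b)"
proof -
  obtain D where D: "is_derivation D" and "\<Delta> (a + ssmul t b) = D (a + ssmul t b)"
    using ld unfolding local_derivation_def by blast
  then have "\<Delta> a + ssmul t (\<Delta> b) = D a + ssmul t (D b)"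
    by (simp add: local_derivation_add[OF ld] local_derivation_ssmul[OF ld]
        derivation_add[OF D] derivation_ssmul[OF D])
  with D show thesis by (rule that)
qed

lemma local_derivation_Gb_relation:
  assumes ld: "local_derivation \<Delta>" and L: "\<Delta> (Lb i) = 0" and "t \<noteq> 0" and "n \<noteq> i"
    and t: "t^2 * (of_int n - 3 * of_int i) =
      (of_int n - 2 * of_int i) * (of_int n - 3/2 * of_int i)"
  shows "(of_int n - 3/2 * of_int i) * coeff (\<Delta> (Gb i)) (SL n) =
    2 * t * coeff (\<Delta> (Gb i)) (SG n)"
proof -
  obtain D where D: "is_derivation D"
    and eq: "\<Delta> (Lb i) + ssmul t (\<Delta> (Gb i)) = D (Lb i) + ssmul t (D (Gb i))"
    using local_derivation_combination[OF ld] by blast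
  define N where "N = (of_int n - of_int i :: complex)"
  define a where "a = coeff (D (Lb 0)) (SL (n - i))"
  define b where "b = coeff (D (Lb 0)) (SG (n - i))"
  define zL where "zL = coeff (\<Delta> (Gb i)) (SL n)"
  define zG where "zG = coeff (\<Delta> (Gb i)) (SG n)"
  define dLL where "dLL = coeff (D (Lb i)) (SL n)"
  define dGL where "dGL = coeff (D (Gb i)) (SL n)"
  define dLG where "dLG = coeff (D (Lb i)) (SG n)"
  define dGG where "dGG = coeff (D (Gb i)) (SG n)"
  have eL: "t * zL = dLL + t * dGL"
    using arg_cong[OF eq, of "\<lambda>w. coeff w (SL n)"]
    by (simp add: L lookup_add zL_def dLL_def dGL_def)
  have eG: "t * zG = dLG + t * dGG"
    using arg_cong[OF eq, of "\<lambda>w. coeff w (SG n)"]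
    by (simp add: L lookup_add zG_def dLG_def dGG_def)
  have qLL: "N * dLL = (of_int n - 2 * of_int i) * a"
    using derivation_L0_eigen[OF D, of "Lb i" i "SL n" n]
    by (simp add: coeff_sbr_basis N_def a_def dLL_def algebra_simps)
  have qGL: "N * dGL = 2 * b"
    using derivation_L0_eigen[OF D, of "Gb i" i "SL n" n]
    by (simp add: coeff_sbr_basis N_def b_def dGL_def algebra_simps)
  have qLG: "N * dLG = (of_int n - 3/2 * of_int i) * b"
    using derivation_L0_eigen[OF D, of "Lb i" i "SG n" n]
    by (simp add: coeff_sbr_basis N_def b_def dLG_def algebra_simps)
  have qGG: "N * dGG = (of_int n - 3 * of_int i) / 2 * a"
    using derivation_L0_eigen[OF D, of "Gb i" i "SG n" n]
    by (simp add: coeff_sbr_basis N_def a_def dGG_def algebra_simps)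
  have "N * t * ((of_int n - 3/2 * of_int i) * zL - 2 * t * zG)
      = (of_int n - 3/2 * of_int i) * (N * dLL + t * (N * dGL)) - 2 * t * (N * dLG + t * (N * dGG))"
    using eL eG by algebra
  also have "\<dots> = (of_int n - 3/2 * of_int i) * ((of_int n - 2 * of_int i) * a + t * (2 * b))
      - 2 * t * ((of_int n - 3/2 * of_int i) * b + t * ((of_int n - 3 * of_int i) / 2 * a))"
    by (simp only: qLL qGL qLG qGG)
  also have "\<dots> = ((of_int n - 2 * of_int i) * (of_int n - 3/2 * of_int i)
      - t^2 * (of_int n - 3 * of_int i)) * a"
    by algebra
  also have "\<dots> = 0" using t by simp
  finally have "N * t * ((of_int n - 3/2 * of_int i) * zL - 2 * t * zG) = 0" .
  moreover have "N \<noteq> 0" using \<open>n \<noteq> i\<close> by (simp add: N_def)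
  ultimately show ?thesis using \<open>t \<noteq> 0\<close> by (simp add: zL_def zG_def)
qed

lemma local_derivation_Gb_vanishes:
  assumes ld: "local_derivation \<Delta>" and L: "\<Delta> (Lb i) = 0"
    and "n \<noteq> i" "n \<noteq> 2 * i" "n \<noteq> 3 * i" "2 * n \<noteq> 3 * i"
  shows "coeff (\<Delta> (Gb i)) (SL n) = 0" and "coeff (\<Delta> (Gb i)) (SG n) = 0"
proof -
  define c :: complex where "c = of_int n - 3/2 * of_int i"
  have "of_int (2 * n - 3 * i) \<noteq> (0 :: complex)" using assms(6) by (simp del: of_int_diff)
  moreover have "of_int (2 * n - 3 * i) = 2 * c" by (simp add: c_def)
  ultimately have "c \<noteq> 0" by auto
  moreover have "(of_int n - 2 * of_int i :: complex) \<noteq> 0"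
    and "(of_int n - 3 * of_int i :: complex) \<noteq> 0"
    using of_int_eq_iff[of n "2 * i", where 'a = complex]
      of_int_eq_iff[of n "3 * i", where 'a = complex] assms(4,5)
    by auto
  moreover define t where "t = csqrt ((of_int n - 2 * of_int i) * c / (of_int n - 3 * of_int i))"
  ultimately have t: "t^2 * (of_int n - 3 * of_int i) = (of_int n - 2 * of_int i) * c"
    and "t \<noteq> 0"
    by (simp_all add: t_def)
  have rel: "c * coeff (\<Delta> (Gb i)) (SL n) = 2 * u * coeff (\<Delta> (Gb i)) (SG n)"
    if "u \<noteq> 0" and "u^2 * (of_int n - 3 * of_int i) = (of_int n - 2 * of_int i) * c" for u
    using local_derivation_Gb_relation[OF ld L that(1) assms(3)] that(2) by (simp add: c_def)
  from rel[of t] rel[of "- t"] t \<open>t \<noteq> 0\<close> \<open>c \<noteq> 0\<close>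
  show "coeff (\<Delta> (Gb i)) (SG n) = 0" and "coeff (\<Delta> (Gb i)) (SL n) = 0"
    by auto
qed

lemma local_derivation_Gb1_SL1:
  assumes ld: "local_derivation \<Delta>" and L1: "\<Delta> (Lb 1) = 0"
  shows "coeff (\<Delta> (Gb 1)) (SL 1) = 0"
proof -
  have rel: "t * coeff (\<Delta> (Gb 1)) (SL 1) = coeff (\<Delta> (Gb 1)) (SG 1)" if t: "t^2 = -1/4" for t
  proof -
    obtain D where D: "is_derivation D"
      and eq: "\<Delta> (Lb 1) + ssmul t (\<Delta> (Gb 1)) = D (Lb 1) + ssmul t (D (Gb 1))"
      using local_derivation_combination[OF ld] by blast
    define c0 where "c0 = coeff (D (Gb 0)) (SL 0)"
    define a1 where "a1 = coeff (D (Lb 1)) (SL 1)"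
    have eL: "t * coeff (\<Delta> (Gb 1)) (SL 1) = a1 + t * c0"
      using arg_cong[OF eq, of "\<lambda>w. coeff w (SL 1)"] derivation_degree_zero[OF D]
      by (simp add: L1 lookup_add a1_def c0_def)
    have eG: "t * coeff (\<Delta> (Gb 1)) (SG 1) = - c0 / 4 + t * a1"
      using arg_cong[OF eq, of "\<lambda>w. coeff w (SG 1)"] derivation_degree_zero[OF D]
      by (simp add: L1 lookup_add a1_def c0_def)
    have "t * (t * coeff (\<Delta> (Gb 1)) (SL 1) - coeff (\<Delta> (Gb 1)) (SG 1)) = 0"
      using eL eG t by algebra
    moreover have "t \<noteq> 0" using t by auto
    ultimately show ?thesis by simp
  qed
  from rel[of "\<i> / 2"] rel[of "- \<i> / 2"]
  have "\<i> * coeff (\<Delta> (Gb 1)) (SL 1) = 0" by (simp add: power2_eq_square algebra_simps)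
  then show ?thesis by simp
qed

lemma finite_support_forward_zero:
  fixes g :: "int \<Rightarrow> 'a :: zero"
  assumes fin: "finite {k. g k \<noteq> 0}"
    and step: "\<And>k. k \<ge> a \<Longrightarrow> g k \<noteq> 0 \<Longrightarrow> g (k + 1) \<noteq> 0"
    and "k \<ge> a"
  shows "g k = 0"
proof (rule ccontr)
  assume "g k \<noteq> 0"
  have "g j \<noteq> 0" if "j \<ge> k" for j
    using that by (induction j rule: int_ge_induct) (use \<open>g k \<noteq> 0\<close> \<open>k \<ge> a\<close> step in auto)
  then have "{k..} \<subseteq> {k. g k \<noteq> 0}" by auto
  with fin show False using infinite_Ici finite_subset by blast
qed

lemma finite_support_backward_zero:
  fixes g :: "int \<Rightarrow> 'a :: zero"
  assumes fin: "finite {k. g k \<noteq> 0}"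
    and step: "\<And>k. k \<le> a \<Longrightarrow> g k \<noteq> 0 \<Longrightarrow> g (k - 1) \<noteq> 0"
    and "k \<le> a"
  shows "g k = 0"
proof -
  have "finite (uminus -` {k. g k \<noteq> 0})" using fin by (rule finite_vimageI) simp
  then have "finite {k. g (- k) \<noteq> 0}" by (simp add: vimage_def)
  then have "g (- (- k)) = 0"
    by (rule finite_support_forward_zero[where a = "- a"]) (use step \<open>k \<le> a\<close> in auto)
  then show ?thesis by simp
qed

lemma local_derivation_Gb0_Gb1_relation:
  assumes ld: "local_derivation \<Delta>" and L0: "\<Delta> (Lb 0) = 0" and L1: "\<Delta> (Lb 1) = 0"
    and s: "s \<noteq> 0"
  shows "s * coeff (\<Delta> (Gb 1)) (SL 2) =
    coeff (\<Delta> (Gb 1)) (SL 3) - s^2 * coeff (\<Delta> (Gb 0)) (SL 0)"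
proof -
  obtain D where D: "is_derivation D"
    and eq: "\<Delta> (Gb 0) + ssmul s (\<Delta> (Gb 1)) = D (Gb 0) + ssmul s (D (Gb 1))"
    using local_derivation_combination[OF ld] by blast
  define g where "g k = 2 * coeff (D (Lb 0)) (SG k) / of_int k" for k
  define y where "y n = coeff (\<Delta> (Gb 1)) (SL n)" for n
  define p where "p = coeff (\<Delta> (Gb 0)) (SL 0)"
  have DG0: "coeff (D (Gb 0)) (SL n) = g n" if "n \<noteq> 0" for n
    using derivation_Gb_SL[OF D that] by (simp add: g_def)
  have DG1: "coeff (D (Gb 1)) (SL n) = g (n - 1)" if "n \<noteq> 1" for n
    using derivation_Gb_SL[OF D that] by (simp add: g_def)
  have \<Delta>G0: "coeff (\<Delta> (Gb 0)) (SL n) = 0" if "n \<noteq> 0" for n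
    using local_derivation_Gb_vanishes(1)[OF ld L0, of n] that by simp
  have \<Delta>G1: "y n = 0" if "n \<noteq> 2" "n \<noteq> 3" for n
    using local_derivation_Gb_vanishes(1)[OF ld L1, of n] local_derivation_Gb1_SL1[OF ld L1] that
    by (cases "n = 1") (auto simp: y_def)
  have E: "coeff (\<Delta> (Gb 0)) (SL n) + s * y n =
      coeff (D (Gb 0)) (SL n) + s * coeff (D (Gb 1)) (SL n)" for n
    using arg_cong[OF eq, of "\<lambda>w. coeff w (SL n)"] by (simp add: lookup_add y_def)
  have rec: "g n + s * g (n - 1) = 0" if "n < 0 \<or> n > 3" for n
    using E[of n] \<Delta>G0[of n] \<Delta>G1[of n] DG0[of n] DG1[of n] that by auto
  have fin: "finite {k. g k \<noteq> 0}"
    by (rule finite_subset[OF _ finite_coeffs_SG[of "D (Lb 0)"]]) (auto simp: g_def)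
  have g3: "g 3 = 0"
  proof (rule finite_support_forward_zero[OF fin, of 3])
    fix k :: int
    assume "k \<ge> 3" "g k \<noteq> 0"
    then show "g (k + 1) \<noteq> 0" using rec[of "k + 1"] s by auto
  qed simp
  have gm1: "g (- 1) = 0"
  proof (rule finite_support_backward_zero[OF fin, of "- 1"])
    fix k :: int
    assume "k \<le> - 1" "g k \<noteq> 0"
    then show "g (k - 1) \<noteq> 0" using rec[of k] by auto
  qed simp
  have "p = coeff (D (Gb 0)) (SL 0)"
    using E[of 0] \<Delta>G1[of 0] DG1[of 0] gm1 by (simp add: p_def)
  then have "g 1 = - s * p"
    using E[of 1] \<Delta>G0[of 1] \<Delta>G1[of 1] DG0[of 1] derivation_degree_zero(2)[OF D]
    by (simp add: eq_neg_iff_add_eq_0)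
  moreover have "s * y 2 = g 2 + s * g 1"
    using E[of 2] \<Delta>G0[of 2] DG0[of 2] DG1[of 2] by simp
  moreover have "g 2 = y 3"
    using E[of 3] \<Delta>G0[of 3] DG0[of 3] DG1[of 3] g3 s by simp
  ultimately show ?thesis by (simp add: y_def p_def power2_eq_square)
qed

lemma local_derivation_Gb0_eq_ssmul_Lb0:
  assumes ld: "local_derivation \<Delta>" and L0: "\<Delta> (Lb 0) = 0"
  shows "\<Delta> (Gb 0) = ssmul (coeff (\<Delta> (Gb 0)) (SL 0)) (Lb 0)"
proof (rule poly_mapping_eqI)
  fix k
  show "coeff (\<Delta> (Gb 0)) k = coeff (ssmul (coeff (\<Delta> (Gb 0)) (SL 0)) (Lb 0)) k"
  proof (cases k)
    case (SL n)
    then show ?thesis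
      using local_derivation_Gb_vanishes(1)[OF ld L0, of n]
      by (cases "n = 0") (auto simp: Lb_def lookup_single)
  next
    case (SG n)
    obtain D where "is_derivation D" "\<Delta> (Gb 0) = D (Gb 0)"
      using ld unfolding local_derivation_def by blast
    then show ?thesis
      using SG local_derivation_Gb_vanishes(2)[OF ld L0, of n] derivation_degree_zero(1)
      by (cases "n = 0") (auto simp: Lb_def lookup_single)
  qed
qed

theorem lemma4p1:
  fixes \<Delta> :: "svir \<Rightarrow> svir"
  assumes "local_derivation \<Delta>"
    and "\<Delta> (Lb 0) = 0"
    and "\<Delta> (Lb 1) = 0"
  shows "\<Delta> (Gb 0) = 0"
proof -
  define p where "p = coeff (\<Delta> (Gb 0)) (SL 0)"
  define y2 where "y2 = coeff (\<Delta> (Gb 1)) (SL 2)"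
  define y3 where "y3 = coeff (\<Delta> (Gb 1)) (SL 3)"
  have "y2 = y3 - p" and "- y2 = y3 - p" and "2 * y2 = y3 - 4 * p"
    using local_derivation_Gb0_Gb1_relation[OF assms, of 1]
      local_derivation_Gb0_Gb1_relation[OF assms, of "- 1"]
      local_derivation_Gb0_Gb1_relation[OF assms, of 2]
    by (simp_all add: p_def y2_def y3_def)
  then have "p = 0" by algebra
  then show ?thesis
    using local_derivation_Gb0_eq_ssmul_Lb0[OF assms(1,2)] by (simp add: p_def)
qed

end
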